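(* If $f,g:\mathbb{R}^{N}\rightarrow [-\infty ,\infty ]$ are Borel measurable, then $f\barwedge g$ and $f\veebar g$ are Lebesgue measurable.
   Context: $(f\barwedge g)(x):=\sup_{y\in\mathbb{R}^N}\min\{f(x-y),g(y)\}$ and $(f\veebar g)(x):=\inf_{y\in\mathbb{R}^N}\max\{f(x-y),g(y)\}$. *)

theory Defs
  imports "HOL-Analysis.Analysis"
begin

definition sup_min_conv :: "('a::ab_group_add \<Rightarrow> ereal) \<Rightarrow> ('a \<Rightarrow> ereal) \<Rightarrow> 'a \<Rightarrow> ereal" where
  "sup_min_conv f g x = (SUP y. min (f (x - y)) (g y))"

definition inf_max_conv :: "('a::ab_group_add \<Rightarrow> ereal) \<Rightarrow> ('a \<Rightarrow> ereal) \<Rightarrow> 'a \<Rightarrow> ereal" where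
  "inf_max_conv f g x = (INF y. max (f (x - y)) (g y))"

end

theory Submission
  imports Defs
begin

text \<open>The superlevel set \<open>{x. a < sup_min_conv f g x}\<close> is the algebraic sum of the Borel sets
  \<open>{u. a < f u}\<close> and \<open>{u. a < g u}\<close>, and dually for the sublevel sets of \<open>inf_max_conv f g\<close>.
  A sum of Borel sets need not be Borel, but it is a Suslin set: Borel sets are projections of
  closed subsets of \<open>X \<times> \<nat>\<^sup>\<nat>\<close>, so the sum is a projection of a closed subset of
  \<open>\<real>\<^sup>N \<times> \<real>\<^sup>N \<times> \<nat>\<^sup>\<nat>\<close>. Such a projection is Lebesgue measurable by Lusin's
  inner approximation: given \<open>c\<close> below its outer measure, bound the coordinates one at a time,
  each time so generously that the outer measure of the restricted projection stays above \<open>c\<close>;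
  by compactness of the bounded part of \<open>\<real>\<^sup>N \<times> \<nat>\<^sup>\<nat>\<close>, the closures of these
  decreasing projections intersect in a closed subset of the projection of measure at least \<open>c\<close>.\<close>

lemma tendsto_fun_iff:
  fixes s :: "'c \<Rightarrow> 'i \<Rightarrow> 'b::topological_space"
  shows "(s \<longlongrightarrow> l) F \<longleftrightarrow> (\<forall>i. ((\<lambda>n. s n i) \<longlongrightarrow> l i) F)"
  using limitin_componentwise[of "\<lambda>_. euclidean" UNIV s l F]
  by (simp add: euclidean_product_topology)

lemma continuous_on_snd_apply:
  "continuous_on S (\<lambda>p::'a::topological_space \<times> ('i \<Rightarrow> 'b::topological_space). snd p i)"
  by (intro continuous_on_compose2[OF continuous_on_product_coordinates continuous_on_snd]) auto

section \<open>Suslin sets\<close>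

definition suslin :: "'a::metric_space set \<Rightarrow> bool" where
  "suslin A \<longleftrightarrow> (\<exists>F::('a \<times> (nat \<Rightarrow> nat)) set. closed F \<and> A = fst ` F)"

lemma suslin_closed: "closed A \<Longrightarrow> suslin A"
  unfolding suslin_def by (intro exI[of _ "A \<times> UNIV"]) (auto intro: closed_Times)

lemma suslin_UN:
  fixes A :: "nat \<Rightarrow> 'a::metric_space set"
  assumes "\<And>n. suslin (A n)"
  shows "suslin (\<Union>n. A n)"
proof -
  obtain F :: "nat \<Rightarrow> ('a \<times> (nat \<Rightarrow> nat)) set" where F: "\<And>n. closed (F n)" "\<And>n. A n = fst ` F n"
    using assms unfolding suslin_def by metis
  text \<open>The first entry of the witness selects the set \<open>A n\<close>, the remaining ones witness membership in it.\<close>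
  define G where "G = (\<Inter>n. - {p. snd p 0 = n} \<union> (\<lambda>p. (fst p, snd p \<circ> Suc)) -` F n)"
  have "open ((\<lambda>p::'a \<times> (nat \<Rightarrow> nat). snd p 0) -` {n})" for n
    by (rule open_vimage[OF open_discrete continuous_on_snd_apply])
  then have "open {p::'a \<times> (nat \<Rightarrow> nat). snd p 0 = n}" for n
    by (simp add: vimage_def)
  moreover have "continuous_on UNIV (\<lambda>p::'a \<times> (nat \<Rightarrow> nat). (fst p, snd p \<circ> Suc))"
    by (intro continuous_on_Pair continuous_on_fst continuous_on_id
        continuous_on_coordinatewise_then_product) (simp add: o_def continuous_on_snd_apply)
  ultimately have "closed (- {p. snd p 0 = n} \<union> (\<lambda>p. (fst p, snd p \<circ> Suc)) -` F n)" for n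
    by (intro closed_Un closed_Compl closed_vimage[OF F(1)])
  then have "closed G"
    unfolding G_def by (rule closed_INT[rule_format])
  moreover have "fst ` G = (\<Union>n. A n)"
  proof (intro equalityI subsetI)
    fix a assume "a \<in> fst ` G"
    then obtain \<sigma> where "(a, \<sigma>) \<in> G" by force
    then show "a \<in> (\<Union>n. A n)" using F(2) by (force simp: G_def)
  next
    fix a assume "a \<in> (\<Union>n. A n)"
    then obtain n \<tau> where "(a, \<tau>) \<in> F n" using F(2) by force
    then have "(a, case_nat n \<tau>) \<in> G" by (simp add: G_def o_def)
    then show "a \<in> fst ` G" by force
  qed
  ultimately show ?thesis unfolding suslin_def by blast
qed

lemma suslin_INT:
  fixes A :: "nat \<Rightarrow> 'a::metric_space set"
  assumes "\<And>n. suslin (A n)"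
  shows "suslin (\<Inter>n. A n)"
proof -
  obtain F :: "nat \<Rightarrow> ('a \<times> (nat \<Rightarrow> nat)) set" where F: "\<And>n. closed (F n)" "\<And>n. A n = fst ` F n"
    using assms unfolding suslin_def by metis
  text \<open>Via \<open>prod_encode\<close> one witness carries a witness for every \<open>A n\<close>.\<close>
  define G where "G = (\<Inter>n. (\<lambda>p. (fst p, \<lambda>k. snd p (prod_encode (n, k)))) -` F n)"
  have "continuous_on UNIV (\<lambda>p::'a \<times> (nat \<Rightarrow> nat). (fst p, \<lambda>k. snd p (prod_encode (n, k))))" for n
    by (intro continuous_on_Pair continuous_on_fst continuous_on_id
        continuous_on_coordinatewise_then_product continuous_on_snd_apply)
  then have "closed ((\<lambda>p. (fst p, \<lambda>k. snd p (prod_encode (n, k)))) -` F n)" for n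
    by (rule closed_vimage[OF F(1)])
  then have "closed G"
    unfolding G_def by (rule closed_INT[rule_format])
  moreover have "fst ` G = (\<Inter>n. A n)"
  proof (intro equalityI subsetI)
    fix a assume "a \<in> fst ` G"
    then show "a \<in> (\<Inter>n. A n)" using F(2) by (force simp: G_def)
  next
    fix a assume "a \<in> (\<Inter>n. A n)"
    then have "\<forall>n. \<exists>\<tau>. (a, \<tau>) \<in> F n" using F(2) by force
    then obtain \<tau> where \<tau>: "\<And>n. (a, \<tau> n) \<in> F n" by metis
    have "(a, \<lambda>j. case_prod \<tau> (prod_decode j)) \<in> G" using \<tau> by (simp add: G_def)
    then show "a \<in> fst ` G" by force
  qed
  ultimately show ?thesis unfolding suslin_def by blast
qed

lemma suslin_open:
  fixes A :: "'a::metric_space set"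
  assumes "open A"
  shows "suslin A"
proof -
  have "fsigma_in euclidean A"
    by (rule open_imp_fsigma_in[OF metrizable_space_euclidean]) (simp add: assms)
  then obtain T where T: "countable T" "T \<subseteq> Collect (closedin euclidean)" "\<Union>T = A"
    unfolding fsigma_in_def union_of_def by blast
  show ?thesis
  proof (cases "T = {}")
    case True
    then show ?thesis using T(3) suslin_closed[of "{}"] by simp
  next
    case False
    then have "range (from_nat_into T) = T"
      using T(1) by (rule range_from_nat_into)
    then have A: "A = (\<Union>n. from_nat_into T n)"
      using T(3) by simp
    have "closed (from_nat_into T n)" for n
      using T(2) from_nat_into[OF False] closed_closedin by blast
    then show ?thesis
      unfolding A by (intro suslin_UN suslin_closed)
  qed
qed

lemma suslin_borel:
  fixes A :: "'a::metric_space set"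
  assumes "A \<in> sets borel"
  shows "suslin A"
proof -
  have "A \<in> sigma_sets UNIV {S. open S}" using assms by (simp add: sets_borel)
  then have "suslin A \<and> suslin (- A)"
  proof induction
    case (Basic a)
    then have "open a" by simp
    then have "closed (-a)" by (rule closed_Compl)
    then show ?case using suslin_open[OF \<open>open a\<close>] suslin_closed by blast
  next
    case Empty
    have "suslin ({}::'a set)" "suslin (UNIV::'a set)" by (rule suslin_closed, simp)+
    then show ?case by (metis Compl_empty_eq)
  next
    case (Compl a)
    have "UNIV - a = - a" by blast
    then show ?case using Compl.IH by (metis double_compl)
  next
    case (Union a)
    have "suslin (\<Union>i. a i)"
      by (rule suslin_UN) (use Union in blast)
    moreover have "suslin (\<Inter>i. - a i)"
      by (rule suslin_INT) (use Union in blast)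
    moreover have "(\<Inter>i. - a i) = - (\<Union>i. a i)"
      by blast
    ultimately show ?case
      by metis
  qed
  then show ?thesis by simp
qed

section \<open>Lebesgue measurability of projections of closed sets\<close>

lemma sets_lebesgue_inner_approx:
  fixes S :: "'a::euclidean_space set"
  assumes finite: "outer_measure_of lebesgue S < \<infinity>"
    and inner: "\<And>c. c < outer_measure_of lebesgue S \<Longrightarrow> \<exists>K\<in>sets lebesgue. K \<subseteq> S \<and> c \<le> emeasure lebesgue K"
  shows "S \<in> sets lebesgue"
proof -
  obtain E where E: "E \<in> sets lebesgue" "S \<subseteq> E" "emeasure lebesgue E = outer_measure_of lebesgue S"
    using outer_measure_of_attain[of S lebesgue] by auto
  define \<K> where "\<K> = {K \<in> sets lebesgue. K \<subseteq> S}"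
  have "{} \<in> \<K>"
    unfolding \<K>_def by simp
  then obtain f :: "nat \<Rightarrow> ennreal"
    where f: "range f \<subseteq> emeasure lebesgue ` \<K>" "Sup (emeasure lebesgue ` \<K>) = Sup (range f)"
    using ennreal_SUP_countable_SUP[of \<K> "emeasure lebesgue"] by blast
  then have "\<forall>j. \<exists>K. K \<in> \<K> \<and> f j = emeasure lebesgue K"
    by blast
  then obtain K where K: "\<And>j. K j \<in> \<K>" "\<And>j. f j = emeasure lebesgue (K j)"
    by metis
  define L where "L = (\<Union>j. K j)"
  have L: "L \<in> sets lebesgue" "L \<subseteq> S"
    using K(1) unfolding L_def \<K>_def by auto
  have "outer_measure_of lebesgue S \<le> Sup (emeasure lebesgue ` \<K>)"
  proof (rule dense_le)
    fix c assume "c < outer_measure_of lebesgue S"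
    then obtain K' where K': "K' \<in> \<K>" "c \<le> emeasure lebesgue K'"
      using inner unfolding \<K>_def by blast
    show "c \<le> Sup (emeasure lebesgue ` \<K>)"
      using K'(2) SUP_upper[OF K'(1)] by (rule order_trans)
  qed
  also have "\<dots> = (SUP j. emeasure lebesgue (K j))"
    by (simp add: f(2) K(2))
  also have "\<dots> \<le> emeasure lebesgue L"
  proof (rule SUP_least)
    fix j
    show "emeasure lebesgue (K j) \<le> emeasure lebesgue L"
      by (intro emeasure_mono L(1)) (auto simp: L_def)
  qed
  finally have "emeasure lebesgue E \<le> emeasure lebesgue L"
    using E(3) by simp
  moreover have "emeasure lebesgue L \<le> emeasure lebesgue E"
    using E(1,2) L(2) by (intro emeasure_mono) auto
  ultimately have "emeasure lebesgue L = emeasure lebesgue E"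
    by order
  moreover have "emeasure lebesgue L < \<infinity>"
    using E(3) finite \<open>emeasure lebesgue L \<le> emeasure lebesgue E\<close> by simp
  ultimately show ?thesis
    using completion.complete_sets_sandwich[OF L(1) E(1) L(2) E(2)] by simp
qed

text \<open>\<open>bounded_by m n (b, \<sigma>)\<close> imposes the first \<open>n\<close> of the bounds
  \<open>norm b \<le> m 0, \<sigma> 0 \<le> m 1, \<sigma> 1 \<le> m 2, \<dots>\<close>.\<close>

definition bounded_by :: "(nat \<Rightarrow> nat) \<Rightarrow> nat \<Rightarrow> 'b::real_normed_vector \<times> (nat \<Rightarrow> nat) \<Rightarrow> bool" where
  "bounded_by m n p \<longleftrightarrow> (0 < n \<longrightarrow> norm (fst p) \<le> real (m 0)) \<and> (\<forall>i. Suc i < n \<longrightarrow> snd p i \<le> m (Suc i))"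

definition proj_bounded_by ::
    "('a \<times> ('b::real_normed_vector \<times> (nat \<Rightarrow> nat))) set \<Rightarrow> (nat \<Rightarrow> nat) \<Rightarrow> nat \<Rightarrow> 'a set" where
  "proj_bounded_by H m n = fst ` {q \<in> H. bounded_by m n (snd q)}"

lemma proj_bounded_by_0 [simp]: "proj_bounded_by H m 0 = fst ` H"
  by (simp add: proj_bounded_by_def bounded_by_def)

lemma bounded_by_cong: "(\<And>i. i < n \<Longrightarrow> m i = m' i) \<Longrightarrow> bounded_by m n p = bounded_by m' n p"
  unfolding bounded_by_def by (metis Suc_lessD zero_less_iff_neq_zero)

lemma proj_bounded_by_cong:
  assumes "\<And>i. i < n \<Longrightarrow> m i = m' i"
  shows "proj_bounded_by H m n = proj_bounded_by H m' n"
proof -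
  have eq: "bounded_by m n = bounded_by m' n"
    using bounded_by_cong[of n m m'] assms by blast
  show ?thesis
    unfolding proj_bounded_by_def eq ..
qed

lemma proj_bounded_by_Suc_subset: "proj_bounded_by H m (Suc n) \<subseteq> proj_bounded_by H m n"
  unfolding proj_bounded_by_def bounded_by_def by auto

lemma incseq_proj_bounded_by_upd: "incseq (\<lambda>k. proj_bounded_by H (m(n := k)) (Suc n))"
proof -
  have "bounded_by (m(n := k)) (Suc n) p \<Longrightarrow> bounded_by (m(n := k')) (Suc n) p" if "k \<le> k'" for k k' p
    using that unfolding bounded_by_def by (auto simp: fun_upd_def)
  then show ?thesis
    unfolding incseq_def proj_bounded_by_def by blast
qed

lemma ex_bounded_by_upd:
  assumes "bounded_by m n p"
  shows "\<exists>k. bounded_by (m(n := k)) (Suc n) p"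
proof -
  define k where "k = max (nat \<lceil>norm (fst p)\<rceil>) (snd p (n - 1))"
  have "bounded_by (m(n := k)) (Suc n) p"
    unfolding bounded_by_def
  proof (intro conjI impI allI)
    show "norm (fst p) \<le> real ((m(n := k)) 0)"
    proof (cases "n = 0")
      case True
      have "norm (fst p) \<le> real (nat \<lceil>norm (fst p)\<rceil>)"
        by linarith
      also have "\<dots> \<le> real k"
        unfolding k_def by simp
      finally show ?thesis
        using True by simp
    next
      case False
      then show ?thesis
        using assms by (simp add: bounded_by_def)
    qed
  next
    fix i assume "Suc i < Suc n"
    then show "snd p i \<le> (m(n := k)) (Suc i)"
      using assms by (cases "Suc i = n") (auto simp: k_def bounded_by_def)
  qed
  then show ?thesis ..
qed

lemma UN_proj_bounded_by_upd: "(\<Union>k. proj_bounded_by H (m(n := k)) (Suc n)) = proj_bounded_by H m n"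
proof (intro equalityI subsetI)
  fix x assume "x \<in> (\<Union>k. proj_bounded_by H (m(n := k)) (Suc n))"
  then obtain k where "x \<in> proj_bounded_by H (m(n := k)) (Suc n)"
    by blast
  then have "x \<in> proj_bounded_by H (m(n := k)) n"
    using proj_bounded_by_Suc_subset[of H "m(n := k)" n] by blast
  moreover have "proj_bounded_by H (m(n := k)) n = proj_bounded_by H m n"
    by (rule proj_bounded_by_cong) simp
  ultimately show "x \<in> proj_bounded_by H m n"
    by simp
next
  fix x assume "x \<in> proj_bounded_by H m n"
  then obtain p where p: "(x, p) \<in> H" "bounded_by m n p"
    unfolding proj_bounded_by_def by force
  then obtain k where "bounded_by (m(n := k)) (Suc n) p"
    using ex_bounded_by_upd by blast
  with p show "x \<in> (\<Union>k. proj_bounded_by H (m(n := k)) (Suc n))"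
    unfolding proj_bounded_by_def by force
qed

lemma outer_measure_proj_bounded_by_gt:
  fixes H :: "('a::euclidean_space \<times> ('b::real_normed_vector \<times> (nat \<Rightarrow> nat))) set"
  assumes "c < outer_measure_of lebesgue (fst ` H)"
  obtains m where "\<And>n. c < outer_measure_of lebesgue (proj_bounded_by H m n)"
proof -
  let ?\<mu> = "outer_measure_of lebesgue"
  have "\<exists>f. \<forall>n. c < ?\<mu> (proj_bounded_by H (f n) n) \<and> (\<exists>k. f (Suc n) = (f n)(n := k))"
  proof (rule dependent_nat_choice)
    show "\<exists>m. c < ?\<mu> (proj_bounded_by H m 0)"
      using assms by simp
  next
    fix m n assume "c < ?\<mu> (proj_bounded_by H m n)"
    moreover have "(SUP k. ?\<mu> (proj_bounded_by H (m(n := k)) (Suc n))) =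
        ?\<mu> (\<Union>k. proj_bounded_by H (m(n := k)) (Suc n))"
      by (rule SUP_outer_measure_of_incseq) (auto intro: incseq_proj_bounded_by_upd)
    ultimately have "c < (SUP k. ?\<mu> (proj_bounded_by H (m(n := k)) (Suc n)))"
      by (simp add: UN_proj_bounded_by_upd)
    then obtain k where "c < ?\<mu> (proj_bounded_by H (m(n := k)) (Suc n))"
      by (auto simp: less_SUP_iff)
    then show "\<exists>m'. c < ?\<mu> (proj_bounded_by H m' (Suc n)) \<and> (\<exists>k. m' = m(n := k))"
      by blast
  qed
  then obtain f :: "nat \<Rightarrow> nat \<Rightarrow> nat"
    where f: "\<And>n. c < ?\<mu> (proj_bounded_by H (f n) n)" "\<And>n. \<exists>k. f (Suc n) = (f n)(n := k)"
    by metis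
  text \<open>Each step only fixes one more entry, so the \<open>f n\<close> converge to a single bound sequence.\<close>
  have f_stable: "f n i = f (Suc i) i" if "i < n" for n i
    using that
  proof (induction n)
    case (Suc n)
    obtain k where k: "f (Suc n) = (f n)(n := k)"
      using f(2) by blast
    show ?case
    proof (cases "i = n")
      case False
      then show ?thesis
        using Suc k by simp
    qed simp
  qed simp
  have "proj_bounded_by H (\<lambda>i. f (Suc i) i) n = proj_bounded_by H (f n) n" for n
    by (rule proj_bounded_by_cong) (metis f_stable)
  then show thesis
    using f(1) by (intro that[of "\<lambda>i. f (Suc i) i"]) simp
qed

lemma bounded_by_convergent_subseq:
  fixes p :: "nat \<Rightarrow> 'b::euclidean_space \<times> (nat \<Rightarrow> nat)"
  assumes bounded: "\<And>n. bounded_by m (Suc n) (p n)"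
  obtains l r where "strict_mono r" "(p \<circ> r) \<longlonglongrightarrow> l"
proof -
  define q where "q n = (fst (p n), \<lambda>i. min (snd (p n) i) (m (Suc i)))" for n
  define Q where "Q = cball (0::'b) (real (m 0)) \<times> (\<Pi>\<^sub>E i\<in>UNIV. {..m (Suc i)})"
  have "compact (\<Pi>\<^sub>E i\<in>UNIV. {..m (Suc i)})"
    using compactin_PiE[of "\<lambda>i. euclidean" UNIV "\<lambda>i. {..m (Suc i)}"]
    by (simp add: euclidean_product_topology finite_imp_compact)
  then have "compact Q"
    unfolding Q_def by (intro compact_Times) auto
  moreover have "q n \<in> Q" for n
    using bounded[of n] by (simp add: q_def Q_def bounded_by_def PiE_iff)
  ultimately obtain l r where r: "strict_mono r" and lim: "(q \<circ> r) \<longlonglongrightarrow> l"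
    using compact_imp_seq_compact seq_compactE by metis
  text \<open>The truncation in \<open>q\<close> is eventually inactive in each coordinate.\<close>
  have "\<forall>\<^sub>F n in sequentially. snd (q (r n)) i = snd (p (r n)) i" for i
  proof (rule eventually_sequentiallyI[of "Suc i"])
    fix n assume "Suc i \<le> n"
    then have "i < r n"
      using seq_suble[OF r, of n] by simp
    then show "snd (q (r n)) i = snd (p (r n)) i"
      using bounded[of "r n"] by (simp add: q_def bounded_by_def)
  qed
  moreover have "(\<lambda>n. snd (q (r n))) \<longlonglongrightarrow> snd l"
    using tendsto_snd[OF lim] by (simp add: o_def)
  then have "(\<lambda>n. snd (q (r n)) i) \<longlonglongrightarrow> snd l i" for i
    unfolding tendsto_fun_iff by blast
  ultimately have "(\<lambda>n. snd (p (r n))) \<longlonglongrightarrow> snd l"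
    unfolding tendsto_fun_iff by (blast intro: Lim_transform_eventually)
  moreover have "(\<lambda>n. fst (p (r n))) \<longlonglongrightarrow> fst l"
    using tendsto_fst[OF lim] by (simp add: o_def q_def)
  ultimately have "(p \<circ> r) \<longlonglongrightarrow> l"
    using tendsto_Pair by (fastforce simp: o_def)
  with r show thesis ..
qed

lemma INT_closure_proj_bounded_by_subset:
  fixes H :: "('a::metric_space \<times> ('b::euclidean_space \<times> (nat \<Rightarrow> nat))) set"
  assumes "closed H"
  shows "(\<Inter>n. closure (proj_bounded_by H m n)) \<subseteq> fst ` H"
proof
  fix x assume x: "x \<in> (\<Inter>n. closure (proj_bounded_by H m n))"
  have "\<forall>n. \<exists>y p. (y, p) \<in> H \<and> bounded_by m (Suc n) p \<and> dist y x < 1 / real (Suc n)"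
  proof
    fix n
    have "x \<in> closure (proj_bounded_by H m (Suc n))"
      using x by blast
    then obtain y where "y \<in> proj_bounded_by H m (Suc n)" "dist y x < 1 / real (Suc n)"
      unfolding closure_approachable by (metis of_nat_0_less_iff zero_less_Suc divide_pos_pos zero_less_one)
    then show "\<exists>y p. (y, p) \<in> H \<and> bounded_by m (Suc n) p \<and> dist y x < 1 / real (Suc n)"
      unfolding proj_bounded_by_def by force
  qed
  then obtain y p where yp: "\<And>n. (y n, p n) \<in> H" "\<And>n. bounded_by m (Suc n) (p n)"
    "\<And>n. dist (y n) x < 1 / real (Suc n)"
    by metis
  have "(\<lambda>n. dist (y n) x) \<longlonglongrightarrow> 0"
    by (rule LIMSEQ_norm_0) (use yp(3) in simp)
  then have "y \<longlonglongrightarrow> x"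
    by (rule tendsto_dist_iff[THEN iffD2])
  obtain l r where r: "strict_mono r" and lim: "(p \<circ> r) \<longlonglongrightarrow> l"
    using bounded_by_convergent_subseq[OF yp(2)] by metis
  have "(\<lambda>n. (y (r n), p (r n))) \<longlonglongrightarrow> (x, l)"
    using tendsto_Pair[OF LIMSEQ_subseq_LIMSEQ[OF \<open>y \<longlonglongrightarrow> x\<close> r] lim] by (simp add: o_def)
  then have "(x, l) \<in> H"
    using yp(1) by (intro Lim_in_closed_set[OF assms]) auto
  then show "x \<in> fst ` H"
    by force
qed

lemma sets_lebesgue_fst_closed_bounded:
  fixes H :: "('a::euclidean_space \<times> ('b::euclidean_space \<times> (nat \<Rightarrow> nat))) set"
  assumes "closed H" "bounded (fst ` H)"
  shows "fst ` H \<in> sets lebesgue"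
proof (rule sets_lebesgue_inner_approx)
  have "outer_measure_of lebesgue (fst ` H) \<le> outer_measure_of lebesgue (closure (fst ` H))"
    by (rule outer_measure_of_mono) (rule closure_subset)
  also have "\<dots> = emeasure lebesgue (closure (fst ` H))"
    by (rule outer_measure_of_eq) (simp add: borel_closed)
  also have "\<dots> < \<infinity>"
    using emeasure_bounded_finite[of "closure (fst ` H)"] assms(2) by (simp add: bounded_closure)
  finally show "outer_measure_of lebesgue (fst ` H) < \<infinity>" .
next
  fix c assume "c < outer_measure_of lebesgue (fst ` H)"
  then obtain m where m: "\<And>n. c < outer_measure_of lebesgue (proj_bounded_by H m n)"
    using outer_measure_proj_bounded_by_gt by metis
  define C where "C n = closure (proj_bounded_by H m n)" for n
  have C: "C n \<in> sets lebesgue" for n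
    unfolding C_def by (simp add: borel_closed)
  have "decseq C"
    unfolding decseq_Suc_iff C_def by (intro allI closure_mono proj_bounded_by_Suc_subset)
  have "proj_bounded_by H m n \<subseteq> fst ` H" for n
    unfolding proj_bounded_by_def by blast
  then have "bounded (C 0)"
    unfolding C_def by (rule bounded_closure[OF bounded_subset[OF assms(2)]])
  then have fin: "emeasure lebesgue (C 0) \<noteq> \<infinity>"
    using emeasure_bounded_finite[of "C 0"] by (simp add: C_def)
  have "c \<le> (INF n. emeasure lebesgue (C n))"
  proof (rule INF_greatest)
    fix n
    have "c < outer_measure_of lebesgue (proj_bounded_by H m n)"
      by (fact m)
    also have "\<dots> \<le> outer_measure_of lebesgue (C n)"
      unfolding C_def by (rule outer_measure_of_mono) (rule closure_subset)
    also have "\<dots> = emeasure lebesgue (C n)"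
      using C by (rule outer_measure_of_eq)
    finally show "c \<le> emeasure lebesgue (C n)"
      by simp
  qed
  also have "\<dots> = emeasure lebesgue (\<Inter>n. C n)"
    by (rule INF_emeasure_decseq'[OF C \<open>decseq C\<close>]) (use fin in blast)
  finally have "c \<le> emeasure lebesgue (\<Inter>n. C n)" .
  moreover have "(\<Inter>n. C n) \<in> sets lebesgue"
    unfolding C_def by (simp add: borel_closed closed_INT)
  moreover have "(\<Inter>n. C n) \<subseteq> fst ` H"
    unfolding C_def by (rule INT_closure_proj_bounded_by_subset[OF assms(1)])
  ultimately show "\<exists>K\<in>sets lebesgue. K \<subseteq> fst ` H \<and> c \<le> emeasure lebesgue K"
    by auto
qed

lemma sets_lebesgue_fst_closed:
  fixes H :: "('a::euclidean_space \<times> ('b::euclidean_space \<times> (nat \<Rightarrow> nat))) set"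
  assumes "closed H"
  shows "fst ` H \<in> sets lebesgue"
proof -
  define H' where "H' R = H \<inter> (cball 0 (real R) \<times> UNIV)" for R :: nat
  have "fst ` H' R \<in> sets lebesgue" for R
  proof (rule sets_lebesgue_fst_closed_bounded)
    show "closed (H' R)"
      unfolding H'_def using assms by (intro closed_Int closed_Times) auto
    have "fst ` H' R \<subseteq> cball 0 (real R)"
      unfolding H'_def by auto
    then show "bounded (fst ` H' R)"
      using bounded_subset by blast
  qed
  moreover have "fst ` H = (\<Union>R. fst ` H' R)"
  proof (intro equalityI subsetI)
    fix x assume "x \<in> fst ` H"
    moreover obtain R :: nat where "norm x \<le> real R"
      using real_arch_simple by blast
    ultimately show "x \<in> (\<Union>R. fst ` H' R)"
      unfolding H'_def by force
  qed (auto simp: H'_def)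
  ultimately show ?thesis
    by auto
qed

lemma sets_lebesgue_suslin_sum:
  fixes A B :: "'a::euclidean_space set"
  assumes "suslin A" "suslin B"
  shows "{x. \<exists>y. x - y \<in> A \<and> y \<in> B} \<in> sets lebesgue"
proof -
  obtain F :: "('a \<times> (nat \<Rightarrow> nat)) set" where F: "closed F" "A = fst ` F"
    using assms(1) unfolding suslin_def by blast
  obtain G :: "('a \<times> (nat \<Rightarrow> nat)) set" where G: "closed G" "B = fst ` G"
    using assms(2) unfolding suslin_def by blast
  text \<open>The witnesses for \<open>x - y \<in> A\<close> and \<open>y \<in> B\<close> are interleaved into one.\<close>
  define H :: "('a \<times> ('a \<times> (nat \<Rightarrow> nat))) set" where
    "H = (\<lambda>(x, y, \<rho>). (x - y, \<lambda>k. \<rho> (2 * k))) -` F \<inter> (\<lambda>(x, y, \<rho>). (y, \<lambda>k. \<rho> (2 * k + 1))) -` G"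
  have "continuous_on UNIV (\<lambda>z::'a \<times> 'a \<times> (nat \<Rightarrow> nat). snd (snd z) j)" for j
    by (intro continuous_on_product_then_coordinatewise[where f = "\<lambda>z. snd (snd z)"] continuous_intros)
  then have "continuous_on UNIV (\<lambda>z::'a \<times> 'a \<times> (nat \<Rightarrow> nat). (fst z - fst (snd z), \<lambda>k. snd (snd z) (2 * k)))"
    and "continuous_on UNIV (\<lambda>z::'a \<times> 'a \<times> (nat \<Rightarrow> nat). (fst (snd z), \<lambda>k. snd (snd z) (2 * k + 1)))"
    by (auto intro!: continuous_on_Pair continuous_on_diff continuous_on_fst continuous_on_snd continuous_on_id
        continuous_on_coordinatewise_then_product)
  then have "closed H"
    unfolding H_def case_prod_beta by (intro closed_Int closed_vimage F(1) G(1))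
  moreover have "{x. \<exists>y. x - y \<in> A \<and> y \<in> B} = fst ` H"
  proof (intro equalityI subsetI)
    fix x assume "x \<in> {x. \<exists>y. x - y \<in> A \<and> y \<in> B}"
    then obtain y \<sigma> \<tau> where st: "(x - y, \<sigma>) \<in> F" "(y, \<tau>) \<in> G"
      using F(2) G(2) by force
    define \<rho> where "\<rho> j = (if even j then \<sigma> (j div 2) else \<tau> (j div 2))" for j
    have "(\<lambda>k. \<rho> (2 * k)) = \<sigma>" "(\<lambda>k. \<rho> (2 * k + 1)) = \<tau>"
      by (auto simp: \<rho>_def)
    then have "(x, y, \<rho>) \<in> H"
      using st by (simp add: H_def)
    then show "x \<in> fst ` H"
      by force
  next
    fix x assume "x \<in> fst ` H"
    then show "x \<in> {x. \<exists>y. x - y \<in> A \<and> y \<in> B}"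
      using F(2) G(2) unfolding H_def by force
  qed
  ultimately show ?thesis
    using sets_lebesgue_fst_closed by metis
qed

section \<open>Measurability of the convolutions\<close>

lemma suslin_vimage_borel:
  fixes f :: "'a::metric_space \<Rightarrow> 'b::topological_space"
  assumes "f \<in> borel_measurable borel" "U \<in> sets borel"
  shows "suslin {x. f x \<in> U}"
  using suslin_borel[OF measurable_sets[OF assms]] by (simp add: vimage_def)

theorem lemma2:
  fixes f g :: "'a::euclidean_space \<Rightarrow> ereal"
  assumes "f \<in> borel_measurable borel" and "g \<in> borel_measurable borel"
  shows "sup_min_conv f g \<in> borel_measurable lebesgue \<and>
         inf_max_conv f g \<in> borel_measurable lebesgue"
proof
  show "sup_min_conv f g \<in> borel_measurable lebesgue"
  proof (rule borel_measurableI_greater)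
    fix a :: ereal
    have "{x \<in> space lebesgue. a < sup_min_conv f g x} =
        {x. \<exists>y. x - y \<in> {u. f u \<in> {a<..}} \<and> y \<in> {u. g u \<in> {a<..}}}"
      by (auto simp: sup_min_conv_def less_SUP_iff)
    also have "\<dots> \<in> sets lebesgue"
      by (intro sets_lebesgue_suslin_sum suslin_vimage_borel assms borel_open open_greaterThan)
    finally show "{x \<in> space lebesgue. a < sup_min_conv f g x} \<in> sets lebesgue" .
  qed
  show "inf_max_conv f g \<in> borel_measurable lebesgue"
  proof (rule borel_measurableI_less)
    fix a :: ereal
    have "{x \<in> space lebesgue. inf_max_conv f g x < a} =
        {x. \<exists>y. x - y \<in> {u. f u \<in> {..<a}} \<and> y \<in> {u. g u \<in> {..<a}}}"
      by (auto simp: inf_max_conv_def INF_less_iff)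
    also have "\<dots> \<in> sets lebesgue"
      by (intro sets_lebesgue_suslin_sum suslin_vimage_borel assms borel_open open_lessThan)
    finally show "{x \<in> space lebesgue. inf_max_conv f g x < a} \<in> sets lebesgue" .
  qed
qed

end
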